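(* Let $G$ be a finite simple graph. Then the total number of (nonempty) cliques of $G$ satisfies \[ \sum_{t\ge 1}N(G,K_t)\;\le\;\sum_{v\in V(G)}\sum_{t=1}^{d(v)+1}\frac{\binom{d(v)+1}{t}}{d(v)+1}\;=\;\sum_{v\in V(G)}\frac{2^{d(v)+1}-1}{d(v)+1}. \]
   Context: $N(G,K_t)$ denotes the number of subgraphs of $G$ isomorphic to the complete graph $K_t$. $d(v)$ is the degree of $v$ in $G$. *)

theory Defs
  imports Complex_Main
begin

definition simple_graph :: "'a set \<Rightarrow> 'a set set \<Rightarrow> bool" where
  "simple_graph V E \<longleftrightarrow> finite V \<and> (\<forall>e\<in>E. e \<subseteq> V \<and> card e = 2)"

definition is_clique :: "'a set \<Rightarrow> 'a set set \<Rightarrow> 'a set \<Rightarrow> bool" where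
  "is_clique V E S \<longleftrightarrow> S \<subseteq> V \<and> (\<forall>u\<in>S. \<forall>w\<in>S. u \<noteq> w \<longrightarrow> {u, w} \<in> E)"

definition num_Kt :: "'a set \<Rightarrow> 'a set set \<Rightarrow> nat \<Rightarrow> nat" where
  "num_Kt V E t = card {S. is_clique V E S \<and> card S = t}"

definition degree :: "'a set \<Rightarrow> 'a set set \<Rightarrow> 'a \<Rightarrow> nat" where
  "degree V E v = card {u\<in>V. {v, u} \<in> E}"

end

theory Submission
  imports Defs
begin

text \<open>Every nonempty clique \<open>S\<close> spreads a total weight of 1 evenly over its vertices,
  so the number of nonempty cliques equals the sum over all vertices \<open>v\<close> of the weights
  \<open>1 / |S|\<close> of the cliques containing \<open>v\<close>. Removing \<open>v\<close> maps these cliques injectively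
  to subsets \<open>T\<close> of the neighbourhood of \<open>v\<close>, with \<open>|S| = |T| + 1\<close>; summing \<open>1 / (|T| + 1)\<close>
  over all subsets of a \<open>d\<close>-set gives \<open>\<Sum>k (d choose k) / (k + 1) = (2^(d+1) - 1) / (d + 1)\<close>.\<close>

lemma sum_Pow_card:
  fixes f :: "nat \<Rightarrow> 'b::comm_semiring_1"
  assumes "finite N"
  shows "(\<Sum>T\<in>Pow N. f (card T)) = (\<Sum>k\<le>card N. of_nat (card N choose k) * f k)"
proof -
  have "(\<Sum>T\<in>Pow N. f (card T)) = (\<Sum>k\<le>card N. \<Sum>T\<in>{T\<in>Pow N. card T = k}. f (card T))"
    by (rule sum.group[symmetric]) (use assms card_mono in auto)
  also have "\<dots> = (\<Sum>k\<le>card N. of_nat (card N choose k) * f k)"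
    using n_subsets[OF assms] by (intro sum.cong) auto
  finally show ?thesis .
qed

lemma sum_inverse_Suc_card_Pow:
  assumes "finite N"
  shows "(\<Sum>T\<in>Pow N. 1 / real (card T + 1))
         = (\<Sum>t=1..card N + 1. real (card N + 1 choose t) / real (card N + 1))"
proof -
  have Suc_choose: "real (n choose k) / real (k + 1) = real (n + 1 choose (k + 1)) / real (n + 1)"
    for n k :: nat
  proof -
    have "real (k + 1) * real (n + 1 choose (k + 1)) = real (n + 1) * real (n choose k)"
      using Suc_times_binomial[of k n] by (metis Suc_eq_plus1 of_nat_mult)
    then show ?thesis by (simp add: field_simps)
  qed
  have shift: "(\<Sum>k\<le>n. g (k + 1)) = (\<Sum>t=1..n + 1. g t)" for g :: "nat \<Rightarrow> real" and n
    using sum.shift_bounds_cl_Suc_ivl[of g 0 n] by (simp add: atLeast0AtMost)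
  have "(\<Sum>T\<in>Pow N. 1 / real (card T + 1))
      = (\<Sum>k\<le>card N. real (card N choose k) / real (k + 1))"
    using sum_Pow_card[OF assms, of "\<lambda>k. 1 / real (k + 1)"] by simp
  also have "\<dots> = (\<Sum>k\<le>card N. real (card N + 1 choose (k + 1)) / real (card N + 1))"
    by (simp only: Suc_choose)
  also have "\<dots> = (\<Sum>t=1..card N + 1. real (card N + 1 choose t) / real (card N + 1))"
    by (rule shift)
  finally show ?thesis .
qed

lemma sum_binomial_atLeast1:
  "(\<Sum>t=1..n. real (n choose t)) = 2 ^ n - 1"
proof -
  have "{..n} = insert 0 {1..n}" by auto
  then have "(\<Sum>t\<le>n. real (n choose t)) = 1 + (\<Sum>t=1..n. real (n choose t))"
    by simp
  moreover have "(\<Sum>t\<le>n. real (n choose t)) = 2 ^ n"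
    using choose_row_sum[of n] by (metis of_nat_numeral of_nat_power of_nat_sum)
  ultimately show ?thesis by simp
qed

lemma card_eq_sum_inverse_card:
  assumes "finite V" "finite \<F>" "\<And>S. S \<in> \<F> \<Longrightarrow> S \<subseteq> V \<and> S \<noteq> {}"
  shows "real (card \<F>) = (\<Sum>v\<in>V. \<Sum>S\<in>{S\<in>\<F>. v \<in> S}. 1 / real (card S))"
proof -
  have "card S \<noteq> 0" if "S \<in> \<F>" for S
    using assms that by (meson card_0_eq finite_subset)
  then have "(\<Sum>S\<in>\<F>. \<Sum>v\<in>S. 1 / real (card S)) = (\<Sum>S\<in>\<F>. 1)"
    by (intro sum.cong) simp_all
  then have "real (card \<F>) = (\<Sum>S\<in>\<F>. \<Sum>v\<in>S. 1 / real (card S))"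
    by simp
  also have "\<dots> = (\<Sum>S\<in>\<F>. \<Sum>v\<in>{v\<in>V. v \<in> S}. 1 / real (card S))"
    using assms(3) by (intro sum.cong) auto
  also have "\<dots> = (\<Sum>v\<in>V. \<Sum>S\<in>{S\<in>\<F>. v \<in> S}. 1 / real (card S))"
    by (rule sum.swap_restrict[OF assms(2,1)])
  finally show ?thesis .
qed

definition neighbours :: "'a set \<Rightarrow> 'a set set \<Rightarrow> 'a \<Rightarrow> 'a set" where
  "neighbours V E v = {u\<in>V. {v, u} \<in> E}"

lemma card_neighbours: "card (neighbours V E v) = degree V E v"
  by (simp add: neighbours_def degree_def)

lemma finite_cliques:
  assumes "simple_graph V E"
  shows "finite {S. is_clique V E S}"
  using assms by (auto simp: simple_graph_def is_clique_def intro: rev_finite_subset[of "Pow V"])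

lemma sum_num_Kt_eq_card_cliques:
  assumes "simple_graph V E"
  shows "(\<Sum>t\<in>{1..card V}. num_Kt V E t) = card {S. is_clique V E S \<and> S \<noteq> {}}"
proof -
  have fV: "finite V" using assms by (simp add: simple_graph_def)
  have "(\<Sum>t\<in>{1..card V}. num_Kt V E t)
      = card (\<Union>t\<in>{1..card V}. {S. is_clique V E S \<and> card S = t})"
    unfolding num_Kt_def
    by (rule card_UN_disjoint[symmetric]) (use finite_cliques[OF assms] in auto)
  also have "(\<Union>t\<in>{1..card V}. {S. is_clique V E S \<and> card S = t})
           = {S. is_clique V E S \<and> S \<noteq> {}}"
    using fV by (auto simp: is_clique_def Suc_le_eq card_gt_0_iff card_mono
                      dest: finite_subset)
  finally show ?thesis .
qed

lemma sum_inverse_card_cliques_containing_le: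
  assumes "simple_graph V E"
  shows "(\<Sum>S\<in>{S\<in>{S. is_clique V E S \<and> S \<noteq> {}}. v \<in> S}. 1 / real (card S))
         \<le> (\<Sum>T\<in>Pow (neighbours V E v). 1 / real (card T + 1))"
proof -
  let ?C = "{S\<in>{S. is_clique V E S \<and> S \<noteq> {}}. v \<in> S}"
  have fV: "finite V" and loopless: "v \<notin> neighbours V E v"
    using assms by (fastforce simp: simple_graph_def neighbours_def)+
  have inj: "inj_on (\<lambda>S. S - {v}) ?C"
    by (rule inj_onI) blast
  have "card S = card (S - {v}) + 1" if "S \<in> ?C" for S
    using that fV card_Suc_Diff1[of S v] by (auto simp: is_clique_def finite_subset)
  then have "(\<Sum>S\<in>?C. 1 / real (card S)) = (\<Sum>S\<in>?C. 1 / real (card (S - {v}) + 1))"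
    by (intro sum.cong) simp_all
  also have "\<dots> = (\<Sum>T\<in>(\<lambda>S. S - {v}) ` ?C. 1 / real (card T + 1))"
    using inj by (simp add: sum.reindex)
  also have "\<dots> \<le> (\<Sum>T\<in>Pow (neighbours V E v). 1 / real (card T + 1))"
    using fV loopless
    by (intro sum_mono2) (auto simp: neighbours_def is_clique_def)
  finally show ?thesis .
qed

theorem mainTheorem2:
  fixes V :: "'a set" and E :: "'a set set"
  assumes "simple_graph V E"
  shows "real (\<Sum>t\<in>{1..card V}. num_Kt V E t)
           \<le> (\<Sum>v\<in>V. \<Sum>t=1..degree V E v + 1.
                 real (degree V E v + 1 choose t) / real (degree V E v + 1))
       \<and> (\<Sum>v\<in>V. \<Sum>t=1..degree V E v + 1.
                 real (degree V E v + 1 choose t) / real (degree V E v + 1))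
         = (\<Sum>v\<in>V. (2 ^ (degree V E v + 1) - 1) / real (degree V E v + 1))"
proof
  let ?C = "{S. is_clique V E S \<and> S \<noteq> {}}"
  have fV: "finite V" using assms by (simp add: simple_graph_def)
  have "real (\<Sum>t\<in>{1..card V}. num_Kt V E t) = real (card ?C)"
    by (simp only: sum_num_Kt_eq_card_cliques[OF assms])
  also have "\<dots> = (\<Sum>v\<in>V. \<Sum>S\<in>{S\<in>?C. v \<in> S}. 1 / real (card S))"
    using fV finite_cliques[OF assms]
    by (intro card_eq_sum_inverse_card) (auto simp: is_clique_def)
  also have "\<dots> \<le> (\<Sum>v\<in>V. \<Sum>T\<in>Pow (neighbours V E v). 1 / real (card T + 1))"
    by (intro sum_mono sum_inverse_card_cliques_containing_le[OF assms])
  also have "\<dots> = (\<Sum>v\<in>V. \<Sum>t=1..degree V E v + 1.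
                 real (degree V E v + 1 choose t) / real (degree V E v + 1))"
    unfolding card_neighbours[symmetric]
    using fV by (intro sum.cong refl sum_inverse_Suc_card_Pow) (simp add: neighbours_def)
  finally show "real (\<Sum>t\<in>{1..card V}. num_Kt V E t) \<le> \<dots>" .
next
  show "(\<Sum>v\<in>V. \<Sum>t=1..degree V E v + 1.
                 real (degree V E v + 1 choose t) / real (degree V E v + 1))
         = (\<Sum>v\<in>V. (2 ^ (degree V E v + 1) - 1) / real (degree V E v + 1))"
    by (intro sum.cong refl) (simp only: sum_binomial_atLeast1 flip: sum_divide_distrib)
qed

end
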